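(* Let $0<q<1$, consider the representation $\mu=\mu_+\oplus\mu_-$ of $C^\infty(S^2_q)$ on $\ell^2(\mathbb{Z}_+)\oplus\ell^2(\mathbb{Z}_+)$, with grading $\gamma=\begin{pmatrix}1&0\\0&-1\end{pmatrix}$, $F=\begin{pmatrix}0&1\\1&0\end{pmatrix}$ and $|D'|=N\oplus N$. Then for every $x\in C^\infty(S^2_q)$: $\mu_+(x)-\mu_-(x)$ is a rapid decay matrix, $[F,\mu(x)]$ is trace class, the function $\psi(s)=\mathrm{Trace}(\gamma\mu(x)|D'|^{-2s})$ (defined for $\mathrm{Re}\,s>1/2$) extends to an entire function, and $$\mathrm{Res}_{s=0}\,s^{-1}\psi(s)=\psi(0)=\tfrac12\mathrm{Trace}\bigl(\gamma F[F,\mu(x)]\bigr)=\mathrm{Trace}_{\ell^2(\mathbb{Z}_+)}\bigl(\mu_+(x)-\mu_-(x)\bigr).$$ That is, the Connes–Moscovici local cocycle, which here has the single component $\varphi_0(x)=\mathrm{Res}_{s=0}s^{-1}\mathrm{Trace}(\gamma\mu(x)|D'|^{-2s})$, coincides with the Chern character component $\mathrm{ch}^F_0(x)=\tfrac12\mathrm{Trace}(\gamma F[F,\mu(x)])$.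
   Context: $\mathbb{N}=\{0,1,2,\dots\}$, $\mathbb{Z}_+=\{1,2,\dots\}$. On $\ell^2(\mathbb{Z}_+)$ with orthonormal basis $\{|n\rangle\}$, $N|n\rangle=n|n\rangle$, $w|n\rangle=|n+1\rangle$. $A^\infty$ is the $*$-algebra of operators $f=\sum_{n\in\mathbb{N}}(f_nw^n+f_{-n-1}(w^* )^{n+1})+\sum_{j,k\in\mathbb{N}}f_{jk}w^j(1-ww^* )(w^* )^k$ with $\{f_n\}_{n\in\mathbb{Z}}$ a rapid decay sequence and $\{f_{jk}\}$ a rapid decay matrix; $\sigma(f)(\theta)=\sum_nf_ne^{in\theta}$. $C^\infty(S^2_q)=\{(x,y)\in A^\infty\oplus A^\infty:\sigma(x)=\sigma(y)\}$, and for $x=(x_+,x_-)$ we write $\mu_\pm(x)=x_\pm$ and $\mu(x)=x_+\oplus x_-$ on $\ell^2(\mathbb{Z}_+)\oplus\ell^2(\mathbb{Z}_+)$. A rapid decay matrix is an operator whose matrix $(T_{jk})$ in the basis $|n\rangle$ satisfies $\sup_{j,k}(j+k)^p|T_{jk}|<\infty$ for all $p$. *)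

theory Defs
  imports "HOL-Complex_Analysis.Complex_Analysis"
begin

text \<open>An operator on l2(Z+) is represented by its matrix in the
basis |n>, n = 1,2,...; we index with 0-based naturals, i.e. M i k is the
entry <i+1| M |k+1>. Operators on l2(Z+) (+) l2(Z+) are matrices indexed by
nat + nat (Inl = first summand, Inr = second summand).\<close>

type_synonym mat = "nat \<Rightarrow> nat \<Rightarrow> complex"
type_synonym mat2 = "nat + nat \<Rightarrow> nat + nat \<Rightarrow> complex"

definition rapid_decay_seq :: "(int \<Rightarrow> complex) \<Rightarrow> bool" where
  "rapid_decay_seq a \<longleftrightarrow> (\<forall>p::nat. \<exists>C. \<forall>n. (real_of_int \<bar>n\<bar>) ^ p * cmod (a n) \<le> C)"

definition rapid_decay_mat :: "mat \<Rightarrow> bool" where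
  "rapid_decay_mat T \<longleftrightarrow> (\<forall>p::nat. \<exists>C. \<forall>j k. (real (j + 1 + (k + 1))) ^ p * cmod (T j k) \<le> C)"

text \<open>Matrix entries of f = sum (f_n w^n + f_{-n-1} w*^{n+1}) + sum f_jk w^j(1-ww*)w*^k:
<m|w^n|k> = [m = k+n], <m|w*^{n+1}|k> = [k = m+n+1], w^j(1-ww*)w*^k = |j+1><k+1|.\<close>
definition Ainf :: "mat set" where
  "Ainf = {M. \<exists>a g. rapid_decay_seq a \<and> rapid_decay_mat g \<and>
                 (\<forall>i k. M i k = a (int i - int k) + g i k)}"

definition toeplitz_coeffs :: "mat \<Rightarrow> int \<Rightarrow> complex" where
  "toeplitz_coeffs M = (THE a. \<exists>g. rapid_decay_seq a \<and> rapid_decay_mat g \<and>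
                 (\<forall>i k. M i k = a (int i - int k) + g i k))"

definition sigma :: "mat \<Rightarrow> real \<Rightarrow> complex" where
  "sigma M \<theta> = (\<Sum>\<^sub>\<infinity>n::int. toeplitz_coeffs M n * exp (\<i> * of_int n * of_real \<theta>))"

definition C_inf_S2q :: "(mat \<times> mat) set" where
  "C_inf_S2q = {(x, y). x \<in> Ainf \<and> y \<in> Ainf \<and> sigma x = sigma y}"

definition mu_plus :: "mat \<times> mat \<Rightarrow> mat" where "mu_plus x = fst x"
definition mu_minus :: "mat \<times> mat \<Rightarrow> mat" where "mu_minus x = snd x"

definition blk :: "mat \<Rightarrow> mat \<Rightarrow> mat \<Rightarrow> mat \<Rightarrow> mat2" where
  "blk A B C D = (\<lambda>i j. case (i, j) of
      (Inl a, Inl b) \<Rightarrow> A a b | (Inl a, Inr b) \<Rightarrow> B a b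
    | (Inr a, Inl b) \<Rightarrow> C a b | (Inr a, Inr b) \<Rightarrow> D a b)"

definition id_mat :: mat where "id_mat = (\<lambda>i j. if i = j then 1 else 0)"
definition zero_mat :: mat where "zero_mat = (\<lambda>i j. 0)"

definition mu :: "mat \<times> mat \<Rightarrow> mat2" where
  "mu x = blk (mu_plus x) zero_mat zero_mat (mu_minus x)"

definition gamma_op :: mat2 where "gamma_op = blk id_mat zero_mat zero_mat (\<lambda>i j. - id_mat i j)"
definition F_op :: mat2 where "F_op = blk zero_mat id_mat id_mat zero_mat"

definition N_pow :: "complex \<Rightarrow> mat" where
  "N_pow s = (\<lambda>i j. if i = j then (of_nat (i + 1)) powr (- 2 * s) else 0)"
definition absD_pow :: "complex \<Rightarrow> mat2" where
  "absD_pow s = blk (N_pow s) zero_mat zero_mat (N_pow s)"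

definition mmult :: "('i \<Rightarrow> 'i \<Rightarrow> complex) \<Rightarrow> ('i \<Rightarrow> 'i \<Rightarrow> complex) \<Rightarrow> ('i \<Rightarrow> 'i \<Rightarrow> complex)" where
  "mmult A B = (\<lambda>i k. \<Sum>\<^sub>\<infinity>j. A i j * B j k)"

definition mcomm :: "('i \<Rightarrow> 'i \<Rightarrow> complex) \<Rightarrow> ('i \<Rightarrow> 'i \<Rightarrow> complex) \<Rightarrow> ('i \<Rightarrow> 'i \<Rightarrow> complex)" where
  "mcomm A B = (\<lambda>i k. mmult A B i k - mmult B A i k)"

definition mtrace :: "('i \<Rightarrow> 'i \<Rightarrow> complex) \<Rightarrow> complex" where
  "mtrace M = (\<Sum>\<^sub>\<infinity>i. M i i)"

definition hilbert_schmidt :: "('i \<Rightarrow> 'i \<Rightarrow> complex) \<Rightarrow> bool" where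
  "hilbert_schmidt A \<longleftrightarrow> (\<lambda>(i, j). (cmod (A i j))\<^sup>2) summable_on UNIV"

definition trace_class :: "('i \<Rightarrow> 'i \<Rightarrow> complex) \<Rightarrow> bool" where
  "trace_class T \<longleftrightarrow> (\<exists>A B. hilbert_schmidt A \<and> hilbert_schmidt B \<and> T = mmult A B)"

definition psi :: "mat \<times> mat \<Rightarrow> complex \<Rightarrow> complex" where
  "psi x s = mtrace (mmult (mmult gamma_op (mu x)) (absD_pow s))"

end

theory Submission
  imports Defs
begin

text \<open>Both components of \<open>x\<close> have the same symbol, so by uniqueness of Fourier
  coefficients they have the same Toeplitz part, and \<open>D = \<mu>\<^sub>+(x) - \<mu>\<^sub>-(x)\<close> is the
  difference of their rapid decay remainders. In block form \<open>[F, \<mu>(x)]\<close> has off-diagonal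
  blocks \<open>\<mp>D\<close>, and \<open>\<gamma>F[F, \<mu>(x)] = D \<oplus> D\<close>, which gives the Chern character side.
  A rapid decay matrix is \<open>N\<^sup>-\<^sup>1\<close> times a Hilbert--Schmidt matrix, hence trace class; and
  since the columns of an element \<open>M\<close> of \<open>A\<^sup>\<infinity>\<close> are uniformly square summable,
  \<open>M N\<^sup>-\<^sup>2\<^sup>s = (M N\<^sup>-\<^sup>s) N\<^sup>-\<^sup>s\<close> is a product of two Hilbert--Schmidt matrices for
  \<open>Re s > 1/2\<close>. The Toeplitz parts cancel on the diagonal, so
  \<open>\<psi>(s) = \<Sum>\<^sub>n D\<^sub>n\<^sub>n n\<^sup>-\<^sup>2\<^sup>s\<close>; this Dirichlet series converges locally uniformly on all of
  \<open>\<complex>\<close> because \<open>D\<^sub>n\<^sub>n\<close> decays rapidly, hence is entire with value \<open>Trace D\<close> at \<open>0\<close>,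
  which is also the residue of \<open>\<psi>(s)/s\<close>. The parameter \<open>q\<close> does not enter the
  matrix model of \<open>\<mu>\<close>.\<close>

section \<open>Rapidly decreasing sequences and matrices\<close>

lemma summable_inverse_square_Suc: "summable (\<lambda>n::nat. 1 / (1 + real n)^2)"
proof -
  have "summable (\<lambda>n::nat. inverse (real n ^ 2))"
    by (rule inverse_power_summable) auto
  then have "summable (\<lambda>n::nat. inverse (real (Suc n) ^ 2))"
    by (subst summable_Suc_iff)
  then show ?thesis
    by (simp add: field_simps)
qed

lemma summable_on_inverse_square_Suc: "(\<lambda>n::nat. 1 / (1 + real n)^2) summable_on UNIV"
  by (rule summable_nonneg_imp_summable_on[OF summable_inverse_square_Suc]) simp

lemma summable_on_inverse_square_int: "(\<lambda>n::int. 1 / (1 + real_of_int \<bar>n\<bar>)^2) summable_on UNIV"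
proof -
  have UNIV_int: "(UNIV::int set) = range int \<union> range (\<lambda>n. - int n)"
    by (metis (no_types, lifting) UNIV_eq_I Un_iff int_cases2 rangeI)
  have "(\<lambda>n::int. 1 / (1 + real_of_int \<bar>n\<bar>)^2) summable_on range int"
    by (subst summable_on_reindex) (auto simp: o_def summable_on_inverse_square_Suc)
  moreover have "(\<lambda>n::int. 1 / (1 + real_of_int \<bar>n\<bar>)^2) summable_on range (\<lambda>n. - int n)"
    by (subst summable_on_reindex) (auto simp: o_def summable_on_inverse_square_Suc inj_on_def)
  ultimately show ?thesis
    by (subst UNIV_int) (rule summable_on_union)
qed

lemma summable_on_comp_inj_le:
  fixes A :: "'a \<Rightarrow> real"
  assumes A: "A summable_on UNIV" and nonneg: "\<And>n. A n \<ge> 0" and inj: "inj \<phi>"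
  shows "(\<lambda>i. A (\<phi> i)) summable_on UNIV" and "(\<Sum>\<^sub>\<infinity>i. A (\<phi> i)) \<le> (\<Sum>\<^sub>\<infinity>n. A n)"
proof -
  show "(\<lambda>i. A (\<phi> i)) summable_on UNIV"
    using summable_on_reindex[OF inj, of A] summable_on_subset_banach[OF A, of "range \<phi>"]
    by (simp add: o_def)
  have "(\<Sum>\<^sub>\<infinity>i. A (\<phi> i)) = (\<Sum>\<^sub>\<infinity>n\<in>range \<phi>. A n)"
    using infsum_reindex[OF inj, of A] by (simp add: o_def)
  also have "\<dots> \<le> (\<Sum>\<^sub>\<infinity>n. A n)"
    by (rule infsum_mono_neutral[OF summable_on_subset_banach[OF A] A]) (auto simp: nonneg)
  finally show "(\<Sum>\<^sub>\<infinity>i. A (\<phi> i)) \<le> (\<Sum>\<^sub>\<infinity>n. A n)" .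
qed

lemma infsum_eq_suminf:
  fixes f :: "nat \<Rightarrow> 'a::{topological_comm_monoid_add, t2_space}"
  assumes "f summable_on UNIV"
  shows "(\<Sum>\<^sub>\<infinity>n. f n) = suminf f"
  using assms by (metis has_sum_imp_sums has_sum_infsum sums_unique)

lemma square_add_le:
  fixes x y :: real
  shows "(x + y)\<^sup>2 \<le> 2 * x\<^sup>2 + 2 * y\<^sup>2"
  using zero_le_power2[of "x - y"] unfolding power2_sum power2_diff by simp

lemma rapid_decay_seq_le:
  assumes "rapid_decay_seq a"
  obtains C where "\<And>n. cmod (a n) \<le> C / (1 + real_of_int \<bar>n\<bar>)^2"
proof -
  obtain C0 where C0: "\<And>n. cmod (a n) \<le> C0"
    using assms unfolding rapid_decay_seq_def by (metis mult_1 power_0)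
  obtain C2 where C2: "\<And>n. (real_of_int \<bar>n\<bar>)^2 * cmod (a n) \<le> C2"
    using assms unfolding rapid_decay_seq_def by blast
  have "cmod (a n) \<le> (2 * C0 + 2 * C2) / (1 + real_of_int \<bar>n\<bar>)^2" for n
  proof -
    define t where "t = real_of_int \<bar>n\<bar>"
    have "(1 + t)^2 \<le> 2 + 2 * t^2"
      using square_add_le[of 1 t] by simp
    then have "(1 + t)^2 * cmod (a n) \<le> 2 * cmod (a n) + 2 * (t^2 * cmod (a n))"
      by (metis distrib_right mult.assoc mult_right_mono norm_ge_zero)
    also have "\<dots> \<le> 2 * C0 + 2 * C2"
      using C0[of n] C2[of n] unfolding t_def by simp
    finally show ?thesis
      unfolding t_def by (simp add: field_simps add_pos_nonneg)
  qed
  then show ?thesis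
    using that by blast
qed

lemma rapid_decay_seq_summable:
  assumes "rapid_decay_seq a"
  shows "(\<lambda>n. cmod (a n)) summable_on UNIV"
proof -
  obtain C where C: "\<And>n. cmod (a n) \<le> C / (1 + real_of_int \<bar>n\<bar>)^2"
    using rapid_decay_seq_le[OF assms] by blast
  show ?thesis
    by (rule summable_on_comparison_test[OF summable_on_cmult_right[OF summable_on_inverse_square_int, of C]])
       (use C in auto)
qed

lemma rapid_decay_seq_square_summable:
  assumes "rapid_decay_seq a"
  shows "(\<lambda>n. (cmod (a n))^2) summable_on UNIV"
proof -
  obtain C where C: "\<And>n. cmod (a n) \<le> C"
    using assms unfolding rapid_decay_seq_def by (metis mult_1 power_0)
  show ?thesis
    by (rule summable_on_comparison_test[OF summable_on_cmult_right[OF rapid_decay_seq_summable[OF assms], of C]])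
       (auto simp: power2_eq_square C mult_right_mono)
qed

lemma rapid_decay_mat_le:
  assumes "rapid_decay_mat g"
  obtains C where "\<And>j k. cmod (g j k) \<le> C / real (j + k + 2) ^ p"
proof -
  obtain C where C: "\<And>j k. real (j + 1 + (k + 1)) ^ p * cmod (g j k) \<le> C"
    using assms unfolding rapid_decay_mat_def by blast
  have "cmod (g j k) \<le> C / real (j + k + 2) ^ p" for j k
    using C[of j k] by (simp add: field_simps add.assoc add.left_commute)
  then show ?thesis
    using that by blast
qed

lemma rapid_decay_mat_diff:
  assumes "rapid_decay_mat g" "rapid_decay_mat h"
  shows "rapid_decay_mat (\<lambda>i k. g i k - h i k)"
  unfolding rapid_decay_mat_def
proof
  fix p :: nat
  obtain C1 where C1: "\<And>j k. real (j + 1 + (k + 1)) ^ p * cmod (g j k) \<le> C1"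
    using assms(1) unfolding rapid_decay_mat_def by blast
  obtain C2 where C2: "\<And>j k. real (j + 1 + (k + 1)) ^ p * cmod (h j k) \<le> C2"
    using assms(2) unfolding rapid_decay_mat_def by blast
  have "real (j + 1 + (k + 1)) ^ p * cmod (g j k - h j k) \<le> C1 + C2" for j k
  proof -
    have "real (j + 1 + (k + 1)) ^ p * cmod (g j k - h j k)
          \<le> real (j + 1 + (k + 1)) ^ p * cmod (g j k) + real (j + 1 + (k + 1)) ^ p * cmod (h j k)"
      by (metis distrib_left mult_left_mono norm_triangle_ineq4 zero_le_power of_nat_0_le_iff)
    then show ?thesis
      using C1[of j k] C2[of j k] by linarith
  qed
  then show "\<exists>C. \<forall>j k. real (j + 1 + (k + 1)) ^ p * cmod (g j k - h j k) \<le> C"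
    by blast
qed

lemma rapid_decay_mat_diagonal:
  assumes "rapid_decay_mat D"
  shows "\<exists>C. \<forall>n. real (n + 1) ^ p * cmod (D n n) \<le> C"
proof -
  obtain C where C: "\<And>j k. real (j + 1 + (k + 1)) ^ p * cmod (D j k) \<le> C"
    using assms unfolding rapid_decay_mat_def by blast
  have "real (n + 1) ^ p * cmod (D n n) \<le> C" for n
    by (rule order_trans[OF _ C[of n n]]) (intro mult_right_mono power_mono; simp)
  then show ?thesis
    by blast
qed

lemma rapid_decay_mat_diag_summable:
  assumes "rapid_decay_mat D"
  shows "(\<lambda>n. norm (D n n)) summable_on UNIV"
proof -
  obtain C where C: "\<And>n. real (n + 1) ^ 2 * cmod (D n n) \<le> C"
    using rapid_decay_mat_diagonal[OF assms] by blast
  have "cmod (D n n) \<le> C * (1 / (1 + real n)^2)" for n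
    using C[of n] by (simp add: field_simps add.commute)
  then show ?thesis
    by (intro summable_on_comparison_test[OF summable_on_cmult_right[OF summable_on_inverse_square_Suc]]) auto
qed

section \<open>The Toeplitz part of an element of \<open>A\<^sup>\<infinity>\<close>\<close>

lemma toeplitz_part_unique:
  assumes g: "rapid_decay_mat g" and g': "rapid_decay_mat g'"
    and eq: "\<And>i k. a (int i - int k) + g i k = a' (int i - int k) + g' i k"
  shows "a = a'"
proof
  fix n
  obtain C where C: "\<And>j k. cmod (g j k) \<le> C / real (j + k + 2) ^ 1"
    using rapid_decay_mat_le[OF g] by blast
  obtain C' where C': "\<And>j k. cmod (g' j k) \<le> C' / real (j + k + 2) ^ 1"
    using rapid_decay_mat_le[OF g'] by blast
  \<comment> \<open>along the diagonal \<open>i - k = n\<close> the difference \<open>a n - a' n\<close> equals \<open>g' i k - g i k\<close>, which tends to 0\<close>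
  have bound: "cmod (a n - a' n) * (real t + 1) \<le> C + C'" for t
  proof -
    define i where "i = nat n + t"
    define k where "k = nat (- n) + t"
    have "int i - int k = n"
      unfolding i_def k_def by simp
    then have "a n - a' n = g' i k - g i k"
      using eq[of i k] by (simp add: algebra_simps)
    then have "cmod (a n - a' n) \<le> (C + C') / real (i + k + 2)"
      using C[of i k] C'[of i k] norm_triangle_ineq4[of "g' i k" "g i k"]
      by (simp add: add_divide_distrib)
    then have "cmod (a n - a' n) * real (i + k + 2) \<le> C + C'"
      by (simp add: field_simps)
    moreover have "cmod (a n - a' n) * (real t + 1) \<le> cmod (a n - a' n) * real (i + k + 2)"
      by (rule mult_left_mono) (auto simp: i_def k_def)
    ultimately show ?thesis
      by simp
  qed
  show "a n = a' n"
  proof (rule ccontr)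
    assume "a n \<noteq> a' n"
    then have pos: "cmod (a n - a' n) > 0"
      by simp
    obtain t :: nat where "real t > (C + C') / cmod (a n - a' n)"
      using reals_Archimedean2 by blast
    then have "cmod (a n - a' n) * real t > C + C'"
      using pos by (simp add: field_simps)
    then show False
      using bound[of t] pos by (simp add: algebra_simps)
  qed
qed

lemma toeplitz_coeffs_eqI:
  assumes "rapid_decay_seq a" "rapid_decay_mat g" "\<And>i k. M i k = a (int i - int k) + g i k"
  shows "toeplitz_coeffs M = a"
  unfolding toeplitz_coeffs_def
proof (rule the_equality)
  show "\<exists>g. rapid_decay_seq a \<and> rapid_decay_mat g \<and> (\<forall>i k. M i k = a (int i - int k) + g i k)"
    using assms by blast
next
  fix a'
  assume "\<exists>g'. rapid_decay_seq a' \<and> rapid_decay_mat g' \<and> (\<forall>i k. M i k = a' (int i - int k) + g' i k)"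
  then obtain g' where "rapid_decay_mat g'" "\<And>i k. M i k = a' (int i - int k) + g' i k"
    by blast
  then show "a' = a"
    using toeplitz_part_unique[of g' g a' a] assms by simp
qed

lemma Ainf_toeplitz_decomp:
  assumes "M \<in> Ainf"
  obtains g where "rapid_decay_seq (toeplitz_coeffs M)" "rapid_decay_mat g"
    "\<And>i k. M i k = toeplitz_coeffs M (int i - int k) + g i k"
proof -
  obtain a g where "rapid_decay_seq a" "rapid_decay_mat g" "\<And>i k. M i k = a (int i - int k) + g i k"
    using assms unfolding Ainf_def by blast
  moreover from this have "toeplitz_coeffs M = a"
    by (rule toeplitz_coeffs_eqI)
  ultimately show ?thesis
    using that by simp
qed

lemma Ainf_bounded:
  assumes "M \<in> Ainf"
  obtains B where "\<And>i k. cmod (M i k) \<le> B"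
proof -
  obtain a g where a: "rapid_decay_seq a" and g: "rapid_decay_mat g"
    and M: "\<And>i k. M i k = a (int i - int k) + g i k"
    using assms unfolding Ainf_def by blast
  obtain Ca where Ca: "\<And>n. cmod (a n) \<le> Ca"
    using a unfolding rapid_decay_seq_def by (metis mult_1 power_0)
  obtain Cg where Cg: "\<And>j k. cmod (g j k) \<le> Cg / real (j + k + 2) ^ 0"
    using rapid_decay_mat_le[OF g] by blast
  have "cmod (M i k) \<le> Ca + Cg" for i k
    unfolding M using Ca Cg norm_triangle_le by (metis add_mono div_by_1 power_0)
  then show ?thesis
    using that by blast
qed

lemma Ainf_columns_square_summable:
  assumes "M \<in> Ainf"
  obtains K where "\<And>k. (\<lambda>i. (cmod (M i k))^2) summable_on UNIV"
    and "\<And>k. (\<Sum>\<^sub>\<infinity>i. (cmod (M i k))^2) \<le> K"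
proof -
  obtain a g where a: "rapid_decay_seq a" and g: "rapid_decay_mat g"
    and M: "\<And>i k. M i k = a (int i - int k) + g i k"
    using assms unfolding Ainf_def by blast
  define A where "A n = (cmod (a n))^2" for n
  have A: "A summable_on UNIV"
    unfolding A_def by (rule rapid_decay_seq_square_summable[OF a])
  obtain C where C: "\<And>j k. cmod (g j k) \<le> C / real (j + k + 2) ^ 1"
    using rapid_decay_mat_le[OF g] by blast
  have "cmod (g 0 0) * 2 \<le> C"
    using C[of 0 0] by (simp add: divide_le_eq)
  then have "C \<ge> 0"
    using norm_ge_zero[of "g 0 0"] by linarith
  define w where "w i = C^2 * (1 / (1 + real i)^2)" for i :: nat
  have w: "w summable_on UNIV"
    unfolding w_def by (intro summable_on_cmult_right summable_on_inverse_square_Suc)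
  define K where "K = 2 * (\<Sum>\<^sub>\<infinity>n. A n) + 2 * (\<Sum>\<^sub>\<infinity>i. w i)"
  have "(\<lambda>i. (cmod (M i k))^2) summable_on UNIV \<and> (\<Sum>\<^sub>\<infinity>i. (cmod (M i k))^2) \<le> K" for k
  proof -
    have "inj (\<lambda>i. int i - int k)"
      unfolding inj_on_def by simp
    then have A_shift: "(\<lambda>i. A (int i - int k)) summable_on UNIV"
      and A_shift_le: "(\<Sum>\<^sub>\<infinity>i. A (int i - int k)) \<le> (\<Sum>\<^sub>\<infinity>n. A n)"
      using summable_on_comp_inj_le[OF A] by (auto simp: A_def)
    define h where "h i = 2 * A (int i - int k) + 2 * w i" for i
    have h: "h summable_on UNIV"
      unfolding h_def by (intro summable_on_add summable_on_cmult_right A_shift w)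
    have le: "(cmod (M i k))^2 \<le> h i" for i
    proof -
      have "cmod (g i k) \<le> C / (1 + real i)"
        by (rule order_trans[OF C[of i k]]) (use \<open>C \<ge> 0\<close> in \<open>auto intro!: divide_left_mono\<close>)
      then have "(cmod (g i k))^2 \<le> w i"
        unfolding w_def using power_mono[of "cmod (g i k)" "C / (1 + real i)" 2] by (simp add: power_divide)
      moreover have "(cmod (M i k))^2 \<le> (cmod (a (int i - int k)) + cmod (g i k))^2"
        unfolding M by (intro power_mono norm_triangle_ineq) simp
      ultimately show ?thesis
        unfolding h_def A_def using square_add_le[of "cmod (a (int i - int k))" "cmod (g i k)"] by linarith
    qed
    have "(\<Sum>\<^sub>\<infinity>i. (cmod (M i k))^2) \<le> (\<Sum>\<^sub>\<infinity>i. h i)"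
      by (rule infsum_mono[OF summable_on_comparison_test[OF h] h]) (auto simp: le)
    also have "(\<Sum>\<^sub>\<infinity>i. h i) = 2 * (\<Sum>\<^sub>\<infinity>i. A (int i - int k)) + 2 * (\<Sum>\<^sub>\<infinity>i. w i)"
      unfolding h_def using A_shift w by (simp add: infsum_add summable_on_cmult_right infsum_cmult_right')
    also have "\<dots> \<le> K"
      unfolding K_def using A_shift_le by simp
    finally show ?thesis
      using summable_on_comparison_test[OF h] le by auto
  qed
  then show ?thesis
    using that by blast
qed

section \<open>Uniqueness of Fourier coefficients\<close>

lemma uniform_limit_finite_subsets_infsum:
  fixes f :: "'i \<Rightarrow> 'a \<Rightarrow> 'b::banach" and M :: "'i \<Rightarrow> real"
  assumes M: "M summable_on UNIV" and bound: "\<And>n x. x \<in> A \<Longrightarrow> norm (f n x) \<le> M n"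
  shows "uniform_limit A (\<lambda>X x. \<Sum>n\<in>X. f n x) (\<lambda>x. \<Sum>\<^sub>\<infinity>n. f n x) (finite_subsets_at_top UNIV)"
proof (rule uniform_limitI)
  fix \<epsilon> :: real
  assume "\<epsilon> > 0"
  have "((\<lambda>X. \<Sum>n\<in>X. M n) \<longlongrightarrow> (\<Sum>\<^sub>\<infinity>n. M n)) (finite_subsets_at_top UNIV)"
    using has_sum_infsum[OF M] unfolding has_sum_def .
  then have "\<forall>\<^sub>F X in finite_subsets_at_top UNIV. (\<Sum>\<^sub>\<infinity>n. M n) - \<epsilon> < (\<Sum>n\<in>X. M n)"
    using \<open>\<epsilon> > 0\<close> by (intro order_tendstoD) auto
  moreover have "\<forall>\<^sub>F X in finite_subsets_at_top UNIV. finite X"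
    by (simp add: eventually_finite_subsets_at_top_weakI)
  ultimately show "\<forall>\<^sub>F X in finite_subsets_at_top UNIV. \<forall>x\<in>A. dist (\<Sum>n\<in>X. f n x) (\<Sum>\<^sub>\<infinity>n. f n x) < \<epsilon>"
  proof eventually_elim
    case (elim X)
    show ?case
    proof
      fix x
      assume "x \<in> A"
      have M_on: "M summable_on B" for B
        by (rule summable_on_subset_banach[OF M]) simp
      have f_on: "(\<lambda>n. f n x) abs_summable_on B" for B
        by (rule summable_on_comparison_test[OF M_on]) (use bound[OF \<open>x \<in> A\<close>] in auto)
      have UNIV_split: "UNIV = X \<union> - X"
        by simp
      have "(\<Sum>\<^sub>\<infinity>n. f n x) = (\<Sum>n\<in>X. f n x) + (\<Sum>\<^sub>\<infinity>n\<in>-X. f n x)"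
        using infsum_Un_disjoint[OF abs_summable_summable[OF f_on] abs_summable_summable[OF f_on], of X "- X"]
        by (simp add: elim(2) flip: UNIV_split)
      moreover have "(\<Sum>\<^sub>\<infinity>n. M n) = (\<Sum>n\<in>X. M n) + (\<Sum>\<^sub>\<infinity>n\<in>-X. M n)"
        using infsum_Un_disjoint[OF M_on M_on, of X "- X"] by (simp add: elim(2) flip: UNIV_split)
      moreover have "norm (\<Sum>\<^sub>\<infinity>n\<in>-X. f n x) \<le> (\<Sum>\<^sub>\<infinity>n\<in>-X. M n)"
        by (rule order_trans[OF norm_infsum_bound[OF f_on] infsum_mono[OF f_on M_on]])
           (use bound[OF \<open>x \<in> A\<close>] in auto)
      ultimately show "dist (\<Sum>n\<in>X. f n x) (\<Sum>\<^sub>\<infinity>n. f n x) < \<epsilon>"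
        using elim(1) by (simp add: dist_norm)
    qed
  qed
qed

lemma has_integral_exp_int:
  fixes k :: int
  shows "((\<lambda>\<theta>::real. exp (\<theta> *\<^sub>R (\<i> * of_int k))) has_integral (if k = 0 then 2 * pi else 0)) {0..2*pi}"
proof (cases "k = 0")
  case True
  then show ?thesis
    using has_integral_const_real[of "1::complex" 0 "2*pi"] by (simp add: scaleR_conv_of_real)
next
  case False
  define z where "z = \<i> * of_int k"
  have "z \<noteq> 0"
    using False unfolding z_def by simp
  have "((\<lambda>\<theta>::real. exp (\<theta> *\<^sub>R z)) has_integral
          (exp ((2*pi) *\<^sub>R z) / z - exp ((0::real) *\<^sub>R z) / z)) {0..2*pi}"
  proof (rule fundamental_theorem_of_calculus)
    fix t :: real
    have "((\<lambda>t. exp (t *\<^sub>R z) / z) has_vector_derivative (exp (t *\<^sub>R z) * z) / z) (at t within {0..2*pi})"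
      by (intro has_vector_derivative_divide exp_scaleR_has_vector_derivative_right)
    then show "((\<lambda>t. exp (t *\<^sub>R z) / z) has_vector_derivative exp (t *\<^sub>R z)) (at t within {0..2*pi})"
      using \<open>z \<noteq> 0\<close> by simp
  qed simp
  moreover have "exp ((2*pi) *\<^sub>R z) = 1"
    unfolding z_def scaleR_conv_of_real
    using exp_integer_2pi[of "of_int k"] by (simp add: algebra_simps)
  ultimately show ?thesis
    using False unfolding z_def by simp
qed

lemma has_integral_fourier_coefficient:
  fixes c :: "int \<Rightarrow> complex"
  assumes c: "(\<lambda>n. norm (c n)) summable_on UNIV"
  shows "((\<lambda>\<theta>. (\<Sum>\<^sub>\<infinity>n. c n * exp (\<i> * of_int n * of_real \<theta>)) * exp (- (\<i> * of_int m * of_real \<theta>)))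
           has_integral 2 * pi * c m) {0..2*pi}"
proof -
  define f where "f n \<theta> = c n * exp (\<theta> *\<^sub>R (\<i> * of_int (n - m)))" for n \<theta>
  have f_eq: "f n \<theta> = c n * exp (\<i> * of_int n * of_real \<theta>) * exp (- (\<i> * of_int m * of_real \<theta>))" for n \<theta>
    unfolding f_def mult.assoc exp_add[symmetric] by (simp add: scaleR_conv_of_real algebra_simps)
  have "uniform_limit {0..2*pi} (\<lambda>X \<theta>. \<Sum>n\<in>X. f n \<theta>) (\<lambda>\<theta>. \<Sum>\<^sub>\<infinity>n. f n \<theta>) (finite_subsets_at_top UNIV)"
    by (rule uniform_limit_finite_subsets_infsum[OF c]) (simp add: f_def norm_mult)
  moreover have "continuous_on {0..2*pi} (\<lambda>\<theta>. \<Sum>n\<in>X. f n \<theta>)" for X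
    unfolding f_def by (intro continuous_intros)
  ultimately obtain I J where I: "\<And>X. ((\<lambda>\<theta>. \<Sum>n\<in>X. f n \<theta>) has_integral I X) {0..2*pi}"
    and J: "((\<lambda>\<theta>. \<Sum>\<^sub>\<infinity>n. f n \<theta>) has_integral J) {0..2*pi}"
    and IJ: "(I \<longlongrightarrow> J) (finite_subsets_at_top UNIV)"
    by (rule uniform_limit_integral) auto
  \<comment> \<open>only the term \<open>n = m\<close> of a finite partial sum has a nonzero integral\<close>
  have "I X = 2 * pi * c m" if "finite X" "m \<in> X" for X
  proof -
    have "((\<lambda>\<theta>. \<Sum>n\<in>X. f n \<theta>) has_integral (\<Sum>n\<in>X. c n * (if n - m = 0 then 2 * pi else 0))) {0..2*pi}"
      unfolding f_def by (intro has_integral_sum that has_integral_mult_right has_integral_exp_int)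
    moreover have "(\<Sum>n\<in>X. c n * (if n - m = 0 then 2 * pi else 0)) = 2 * pi * c m"
      using that by (simp add: if_distrib sum.delta cong: if_cong)
    ultimately show ?thesis
      using I[of X] has_integral_unique by metis
  qed
  then have "\<forall>\<^sub>F X in finite_subsets_at_top UNIV. I X = 2 * pi * c m"
    unfolding eventually_finite_subsets_at_top by (intro exI[of _ "{m}"]) auto
  then have "(I \<longlongrightarrow> 2 * pi * c m) (finite_subsets_at_top UNIV)"
    by (rule tendsto_eventually)
  with IJ have "J = 2 * pi * c m"
    by (intro tendsto_unique[OF finite_subsets_at_top_neq_bot])
  moreover have "(\<Sum>\<^sub>\<infinity>n. f n \<theta>) = (\<Sum>\<^sub>\<infinity>n. c n * exp (\<i> * of_int n * of_real \<theta>)) * exp (- (\<i> * of_int m * of_real \<theta>))" for \<theta>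
    unfolding f_eq by (rule infsum_cmult_left')
  ultimately show ?thesis
    using J by simp
qed

lemma fourier_coefficients_unique:
  fixes c d :: "int \<Rightarrow> complex"
  assumes "(\<lambda>n. norm (c n)) summable_on UNIV" "(\<lambda>n. norm (d n)) summable_on UNIV"
    and "\<And>\<theta>. (\<Sum>\<^sub>\<infinity>n. c n * exp (\<i> * of_int n * of_real \<theta>)) = (\<Sum>\<^sub>\<infinity>n. d n * exp (\<i> * of_int n * of_real \<theta>))"
  shows "c = d"
proof
  fix m
  have "2 * pi * c m = 2 * pi * d m"
    using has_integral_fourier_coefficient[OF assms(1), of m] has_integral_fourier_coefficient[OF assms(2), of m]
    unfolding assms(3) by (rule has_integral_unique)
  then show "c m = d m"
    by simp
qed

lemma toeplitz_coeffs_eq_if_sigma_eq: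
  assumes "M \<in> Ainf" "M' \<in> Ainf" "sigma M = sigma M'"
  shows "toeplitz_coeffs M = toeplitz_coeffs M'"
proof (rule fourier_coefficients_unique)
  have "rapid_decay_seq (toeplitz_coeffs M)" "rapid_decay_seq (toeplitz_coeffs M')"
    using Ainf_toeplitz_decomp assms(1,2) by metis+
  then show "(\<lambda>n. norm (toeplitz_coeffs M n)) summable_on UNIV"
    "(\<lambda>n. norm (toeplitz_coeffs M' n)) summable_on UNIV"
    by (simp_all add: rapid_decay_seq_summable)
  show "(\<Sum>\<^sub>\<infinity>n. toeplitz_coeffs M n * exp (\<i> * of_int n * of_real \<theta>))
      = (\<Sum>\<^sub>\<infinity>n. toeplitz_coeffs M' n * exp (\<i> * of_int n * of_real \<theta>))" for \<theta>
    using assms(3) unfolding sigma_def by metis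
qed

lemma C_inf_S2q_Ainf:
  assumes "x \<in> C_inf_S2q"
  shows "mu_plus x \<in> Ainf" "mu_minus x \<in> Ainf"
  using assms unfolding C_inf_S2q_def mu_plus_def mu_minus_def by auto

lemma C_inf_S2q_rapid_decay_diff:
  assumes "x \<in> C_inf_S2q"
  shows "rapid_decay_mat (\<lambda>i k. mu_plus x i k - mu_minus x i k)"
proof -
  note xp = C_inf_S2q_Ainf(1)[OF assms] and xm = C_inf_S2q_Ainf(2)[OF assms]
  have "sigma (mu_plus x) = sigma (mu_minus x)"
    using assms unfolding C_inf_S2q_def mu_plus_def mu_minus_def by auto
  with xp xm have same: "toeplitz_coeffs (mu_plus x) = toeplitz_coeffs (mu_minus x)"
    by (rule toeplitz_coeffs_eq_if_sigma_eq)
  obtain gp where gp: "rapid_decay_mat gp"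
    "\<And>i k. mu_plus x i k = toeplitz_coeffs (mu_plus x) (int i - int k) + gp i k"
    using Ainf_toeplitz_decomp[OF xp] by metis
  obtain gm where gm: "rapid_decay_mat gm"
    "\<And>i k. mu_minus x i k = toeplitz_coeffs (mu_minus x) (int i - int k) + gm i k"
    using Ainf_toeplitz_decomp[OF xm] by metis
  have "(\<lambda>i k. mu_plus x i k - mu_minus x i k) = (\<lambda>i k. gp i k - gm i k)"
    by (simp add: gp(2) gm(2) same)
  then show ?thesis
    using rapid_decay_mat_diff[OF gp(1) gm(1)] by simp
qed

section \<open>Block matrices\<close>

definition diag_mat :: "('i \<Rightarrow> complex) \<Rightarrow> 'i \<Rightarrow> 'i \<Rightarrow> complex" where
  "diag_mat d = (\<lambda>i j. if i = j then d i else 0)"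

lemma mmult_diag_mat_right: "mmult M (diag_mat d) = (\<lambda>i k. M i k * d k)"
proof (intro ext)
  fix i k
  have "(\<Sum>\<^sub>\<infinity>j. M i j * diag_mat d j k) = (\<Sum>\<^sub>\<infinity>j\<in>{k}. M i j * diag_mat d j k)"
    by (rule infsum_cong_neutral) (auto simp: diag_mat_def)
  then show "mmult M (diag_mat d) i k = M i k * d k"
    by (simp add: mmult_def diag_mat_def)
qed

lemma mmult_diag_mat_left: "mmult (diag_mat d) M = (\<lambda>i k. d i * M i k)"
proof (intro ext)
  fix i k
  have "(\<Sum>\<^sub>\<infinity>j. diag_mat d i j * M j k) = (\<Sum>\<^sub>\<infinity>j\<in>{i}. diag_mat d i j * M j k)"
    by (rule infsum_cong_neutral) (auto simp: diag_mat_def)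
  then show "mmult (diag_mat d) M i k = d i * M i k"
    by (simp add: mmult_def diag_mat_def)
qed

lemma id_mat_eq_diag_mat: "id_mat = diag_mat (\<lambda>_. 1)"
  by (simp add: id_mat_def diag_mat_def)

lemma N_pow_eq_diag_mat: "N_pow s = diag_mat (\<lambda>k. of_nat (k + 1) powr (- 2 * s))"
  unfolding N_pow_def diag_mat_def ..

lemma zero_mat_apply [simp]: "zero_mat i k = 0"
  by (simp add: zero_mat_def)

text \<open>Folding \<open>\<lambda>i k. 0\<close> back to \<open>zero_mat\<close> keeps block matrices recognisable to
  the block multiplication rules; it loops together with \<open>zero_mat_def\<close>.\<close>

lemma zero_mat_fold [simp]: "(\<lambda>i k. 0) = zero_mat"
  by (simp add: zero_mat_def)

lemma mmult_id_mat_left [simp]: "mmult id_mat M = M"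
  by (simp add: id_mat_eq_diag_mat mmult_diag_mat_left)

lemma mmult_id_mat_right [simp]: "mmult M id_mat = M"
  by (simp add: id_mat_eq_diag_mat mmult_diag_mat_right)

lemma mmult_zero_mat_right [simp]: "mmult M zero_mat = zero_mat"
  unfolding mmult_def zero_mat_def by simp

lemma mmult_uminus_left: "mmult (\<lambda>i j. - A i j) B = (\<lambda>i k. - mmult A B i k)"
  by (simp add: mmult_def infsum_uminus)

lemma blk_simps [simp]:
  "blk A B C D (Inl a) (Inl b) = A a b" "blk A B C D (Inl a) (Inr b) = B a b"
  "blk A B C D (Inr a) (Inl b) = C a b" "blk A B C D (Inr a) (Inr b) = D a b"
  by (simp_all add: blk_def)

lemma blk_diff:
  "(\<lambda>i k. blk A B C D i k - blk A' B' C' D' i k)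
   = blk (\<lambda>i k. A i k - A' i k) (\<lambda>i k. B i k - B' i k) (\<lambda>i k. C i k - C' i k) (\<lambda>i k. D i k - D' i k)"
  by (intro ext) (simp add: blk_def split: sum.split)

lemma infsum_Inl:
  assumes "\<And>n. f (Inr n) = 0"
  shows "(\<Sum>\<^sub>\<infinity>j. f j) = (\<Sum>\<^sub>\<infinity>n. f (Inl n))"
proof -
  have "f j = 0" if "j \<notin> range Inl" for j
    using that assms by (cases j) auto
  then have "(\<Sum>\<^sub>\<infinity>j. f j) = (\<Sum>\<^sub>\<infinity>j\<in>range Inl. f j)"
    by (intro infsum_cong_neutral) auto
  also have "\<dots> = (\<Sum>\<^sub>\<infinity>n. f (Inl n))"
    by (simp add: infsum_reindex o_def)
  finally show ?thesis .
qed

lemma infsum_Inr: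
  assumes "\<And>n. f (Inl n) = 0"
  shows "(\<Sum>\<^sub>\<infinity>j. f j) = (\<Sum>\<^sub>\<infinity>n. f (Inr n))"
proof -
  have "f j = 0" if "j \<notin> range Inr" for j
    using that assms by (cases j) auto
  then have "(\<Sum>\<^sub>\<infinity>j. f j) = (\<Sum>\<^sub>\<infinity>j\<in>range Inr. f j)"
    by (intro infsum_cong_neutral) auto
  also have "\<dots> = (\<Sum>\<^sub>\<infinity>n. f (Inr n))"
    by (simp add: infsum_reindex o_def)
  finally show ?thesis .
qed

lemma mmult_blk_diag:
  "mmult (blk A zero_mat zero_mat D) (blk P Q R S)
   = blk (mmult A P) (mmult A Q) (mmult D R) (mmult D S)"
proof (intro ext)
  fix i k :: "nat + nat"
  show "mmult (blk A zero_mat zero_mat D) (blk P Q R S) i k = blk (mmult A P) (mmult A Q) (mmult D R) (mmult D S) i k"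
    unfolding mmult_def
    by (cases i; cases k) (simp_all add: infsum_Inl infsum_Inr)
qed

lemma mmult_blk_antidiag:
  "mmult (blk zero_mat B C zero_mat) (blk P Q R S)
   = blk (mmult B R) (mmult B S) (mmult C P) (mmult C Q)"
proof (intro ext)
  fix i k :: "nat + nat"
  show "mmult (blk zero_mat B C zero_mat) (blk P Q R S) i k = blk (mmult B R) (mmult B S) (mmult C P) (mmult C Q) i k"
    unfolding mmult_def
    by (cases i; cases k) (simp_all add: infsum_Inl infsum_Inr)
qed

lemma mtrace_blk:
  assumes "(\<lambda>i. P i i) summable_on UNIV" "(\<lambda>i. S i i) summable_on UNIV"
  shows "mtrace (blk P Q R S) = mtrace P + mtrace S"
proof -
  define f where "f i = blk P Q R S i i" for i
  have "j \<in> range Inl \<union> range Inr" for j :: "nat + nat"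
    by (cases j) auto
  then have "(UNIV :: (nat + nat) set) = range Inl \<union> range Inr"
    by blast
  then have "mtrace (blk P Q R S) = infsum f (range Inl \<union> range Inr)"
    unfolding mtrace_def f_def by simp
  also have "\<dots> = infsum f (range Inl) + infsum f (range Inr)"
    by (rule infsum_Un_disjoint) (auto simp: summable_on_reindex o_def f_def assms)
  also have "\<dots> = mtrace P + mtrace S"
    by (simp add: infsum_reindex o_def f_def mtrace_def)
  finally show ?thesis .
qed

lemma mcomm_F_mu:
  "mcomm F_op (mu x)
   = blk zero_mat (\<lambda>i k. mu_minus x i k - mu_plus x i k) (\<lambda>i k. mu_plus x i k - mu_minus x i k) zero_mat"
  unfolding mcomm_def F_op_def mu_def
  by (simp add: mmult_blk_antidiag mmult_blk_diag blk_diff)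

lemma mmult_gamma_F_mcomm_F_mu:
  "mmult (mmult gamma_op F_op) (mcomm F_op (mu x))
   = blk (\<lambda>i k. mu_plus x i k - mu_minus x i k) zero_mat zero_mat (\<lambda>i k. mu_plus x i k - mu_minus x i k)"
  unfolding mcomm_F_mu unfolding gamma_op_def F_op_def
  by (simp add: mmult_blk_antidiag mmult_blk_diag mmult_uminus_left)

lemma mmult_gamma_mu_absD_pow:
  "mmult (mmult gamma_op (mu x)) (absD_pow s)
   = blk (mmult (mu_plus x) (N_pow s)) zero_mat zero_mat (\<lambda>i k. - mmult (mu_minus x) (N_pow s) i k)"
  unfolding gamma_op_def mu_def absD_pow_def
  by (simp add: mmult_blk_diag mmult_uminus_left)

section \<open>Hilbert--Schmidt and trace class matrices\<close>

lemma hilbert_schmidt_zero_mat: "hilbert_schmidt zero_mat"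
  by (simp add: hilbert_schmidt_def case_prod_unfold)

lemma hilbert_schmidt_uminus: "hilbert_schmidt A \<Longrightarrow> hilbert_schmidt (\<lambda>i j. - A i j)"
  by (simp add: hilbert_schmidt_def)

lemma hilbert_schmidt_diag_mat:
  assumes "(\<lambda>i. (cmod (d i))^2) summable_on UNIV"
  shows "hilbert_schmidt (diag_mat d)"
proof -
  define f where "f = (\<lambda>(i, j). (cmod (diag_mat d i j))\<^sup>2)"
  have "f summable_on range (\<lambda>i. (i, i))"
    by (subst summable_on_reindex) (use assms in \<open>auto simp: inj_on_def f_def o_def diag_mat_def\<close>)
  then have "f summable_on UNIV"
    by (rule summable_on_cong_neutral[THEN iffD1, rotated -1]) (auto simp: f_def diag_mat_def)
  then show ?thesis
    unfolding hilbert_schmidt_def f_def .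
qed

lemma hilbert_schmidt_blk:
  assumes "hilbert_schmidt P" "hilbert_schmidt Q" "hilbert_schmidt R" "hilbert_schmidt S"
  shows "hilbert_schmidt (blk P Q R S)"
proof -
  define f where "f = (\<lambda>(i, j). (cmod (blk P Q R S i j))\<^sup>2)"
  have summable_range: "f summable_on range (map_prod l r)"
    if "inj l" "inj r" "hilbert_schmidt (\<lambda>a b. blk P Q R S (l a) (r b))"
    for l r :: "nat \<Rightarrow> nat + nat"
    using that by (subst summable_on_reindex)
      (auto simp: prod.inj_map f_def o_def hilbert_schmidt_def case_prod_unfold)
  have UNIV_split: "(UNIV :: ((nat + nat) \<times> (nat + nat)) set)
        = range (map_prod Inl Inl) \<union> range (map_prod Inl Inr) \<union> range (map_prod Inr Inl) \<union> range (map_prod Inr Inr)"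
  proof (intro set_eqI iffI)
    fix z :: "(nat + nat) \<times> (nat + nat)"
    show "z \<in> range (map_prod Inl Inl) \<union> range (map_prod Inl Inr) \<union> range (map_prod Inr Inl) \<union> range (map_prod Inr Inr)"
      by (cases z; rename_tac i j; case_tac i; case_tac j) (auto simp: image_iff)
  qed simp
  have "f summable_on range (map_prod Inl Inl)" "f summable_on range (map_prod Inl Inr)"
    "f summable_on range (map_prod Inr Inl)" "f summable_on range (map_prod Inr Inr)"
    by (intro summable_range; simp add: assms)+
  then have "f summable_on UNIV"
    by (subst UNIV_split) (intro summable_on_union)
  then show ?thesis
    unfolding hilbert_schmidt_def f_def .
qed

lemma trace_class_uminus:
  assumes "trace_class T"
  shows "trace_class (\<lambda>i k. - T i k)"
proof -
  obtain A B where "hilbert_schmidt A" "hilbert_schmidt B" "T = mmult A B"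
    using assms unfolding trace_class_def by blast
  then show ?thesis
    unfolding trace_class_def
    by (intro exI[of _ "\<lambda>i j. - A i j"] exI[of _ B]) (simp add: hilbert_schmidt_uminus mmult_uminus_left)
qed

lemma trace_class_blk_diag:
  assumes "trace_class P" "trace_class S"
  shows "trace_class (blk P zero_mat zero_mat S)"
proof -
  obtain A1 B1 A2 B2 where "hilbert_schmidt A1" "hilbert_schmidt B1" "P = mmult A1 B1"
    "hilbert_schmidt A2" "hilbert_schmidt B2" "S = mmult A2 B2"
    using assms unfolding trace_class_def by blast
  then show ?thesis
    unfolding trace_class_def
    by (intro exI[of _ "blk A1 zero_mat zero_mat A2"] exI[of _ "blk B1 zero_mat zero_mat B2"])
      (simp add: hilbert_schmidt_blk hilbert_schmidt_zero_mat mmult_blk_diag)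
qed

lemma trace_class_blk_antidiag:
  assumes "trace_class Q" "trace_class R"
  shows "trace_class (blk zero_mat Q R zero_mat)"
proof -
  obtain A1 B1 A2 B2 where "hilbert_schmidt A1" "hilbert_schmidt B1" "Q = mmult A1 B1"
    "hilbert_schmidt A2" "hilbert_schmidt B2" "R = mmult A2 B2"
    using assms unfolding trace_class_def by blast
  then show ?thesis
    unfolding trace_class_def
    by (intro exI[of _ "blk A1 zero_mat zero_mat A2"] exI[of _ "blk zero_mat B1 B2 zero_mat"])
      (simp add: hilbert_schmidt_blk hilbert_schmidt_zero_mat mmult_blk_diag)
qed

lemma summable_on_product_mult:
  fixes f g :: "'a \<Rightarrow> real"
  assumes "\<And>i. f i \<ge> 0" "\<And>k. g k \<ge> 0" "f summable_on UNIV" "g summable_on UNIV"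
  shows "(\<lambda>(i, k). f i * g k) summable_on UNIV"
proof -
  have "(\<lambda>(i, k). f i * g k) summable_on Sigma UNIV (\<lambda>_. UNIV)"
  proof (rule summable_on_SigmaI[where g = "\<lambda>i. f i * (\<Sum>\<^sub>\<infinity>k. g k)"])
    show "((\<lambda>k. case (i, k) of (i, k) \<Rightarrow> f i * g k) has_sum f i * (\<Sum>\<^sub>\<infinity>k. g k)) UNIV" for i
      using has_sum_cmult_right[OF has_sum_infsum[OF assms(4)], of "f i"] by simp
    show "(\<lambda>i. f i * (\<Sum>\<^sub>\<infinity>k. g k)) summable_on UNIV"
      by (rule summable_on_cmult_left[OF assms(3)])
  qed (use assms in auto)
  then show ?thesis
    by simp
qed

lemma hilbert_schmidt_scale_rows_rapid_decay:
  assumes "rapid_decay_mat D"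
  shows "hilbert_schmidt (\<lambda>i k. of_nat (i + 1) * D i k)"
proof -
  obtain C where C: "\<And>j k. cmod (D j k) \<le> C / real (j + k + 2) ^ 3"
    using rapid_decay_mat_le[OF assms] by blast
  define w where "w i = 1 / (1 + real i)^2" for i
  have bound: "(cmod (of_nat (i + 1) * D i k))^2 \<le> C^2 * w i * w k" for i k
  proof -
    define u where "u = 1 + real i"
    define v where "v = 1 + real k"
    have "u > 0" "v > 0"
      unfolding u_def v_def by auto
    have "u * u * v \<le> real (i + k + 2) ^ 3"
      unfolding u_def v_def power3_eq_cube by (intro mult_mono) auto
    then have "cmod (D i k) * (u * u * v) \<le> cmod (D i k) * real (i + k + 2) ^ 3"
      by (rule mult_left_mono) simp
    also have "\<dots> \<le> C"
      using C[of i k] by (simp add: field_simps)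
    finally have "u * cmod (D i k) \<le> C / (u * v)"
      using \<open>u > 0\<close> \<open>v > 0\<close> by (simp add: field_simps)
    then have "(u * cmod (D i k))^2 \<le> (C / (u * v))^2"
      by (rule power_mono) (use \<open>u > 0\<close> in simp)
    moreover have "cmod (of_nat (i + 1) * D i k) = u * cmod (D i k)"
      by (simp only: norm_mult norm_of_nat) (simp add: u_def)
    ultimately show ?thesis
      unfolding w_def u_def v_def by (simp add: power_divide power_mult_distrib)
  qed
  have w: "w summable_on UNIV"
    unfolding w_def by (rule summable_on_inverse_square_Suc)
  have "(\<lambda>(i, k). C^2 * w i * w k) summable_on UNIV"
    using summable_on_product_mult[OF _ _ summable_on_cmult_right[OF w, of "C^2"] w]
    by (simp add: w_def)
  then show ?thesis
    unfolding hilbert_schmidt_def by (rule summable_on_comparison_test) (use bound in auto)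
qed

lemma trace_class_rapid_decay_mat:
  assumes "rapid_decay_mat D"
  shows "trace_class D"
  unfolding trace_class_def
proof (intro exI conjI)
  show "hilbert_schmidt (diag_mat (\<lambda>i. 1 / of_nat (i + 1)))"
    by (rule hilbert_schmidt_diag_mat, simp only: norm_divide norm_one norm_of_nat)
      (use summable_on_inverse_square_Suc in \<open>simp add: power_divide add.commute\<close>)
  show "hilbert_schmidt (\<lambda>i k. of_nat (i + 1) * D i k)"
    by (rule hilbert_schmidt_scale_rows_rapid_decay[OF assms])
  show "D = mmult (diag_mat (\<lambda>i. 1 / of_nat (i + 1))) (\<lambda>i k. of_nat (i + 1) * D i k)"
    by (simp add: mmult_diag_mat_left del: of_nat_Suc)
qed

lemma hilbert_schmidt_scale_columns:
  assumes col: "\<And>k. (\<lambda>i. (cmod (M i k))^2) summable_on UNIV" "\<And>k. (\<Sum>\<^sub>\<infinity>i. (cmod (M i k))^2) \<le> K"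
    and w: "(\<lambda>k. (cmod (w k))^2) summable_on UNIV"
  shows "hilbert_schmidt (\<lambda>i k. M i k * w k)"
proof -
  define f where "f = (\<lambda>(k, i). (cmod (M i k))^2 * (cmod (w k))^2)"
  have "f summable_on Sigma UNIV (\<lambda>_. UNIV)"
  proof (rule summable_on_SigmaI[where g = "\<lambda>k. (\<Sum>\<^sub>\<infinity>i. (cmod (M i k))^2) * (cmod (w k))^2"])
    show "((\<lambda>i. f (k, i)) has_sum (\<Sum>\<^sub>\<infinity>i. (cmod (M i k))^2) * (cmod (w k))^2) UNIV" for k
      using has_sum_cmult_left[OF has_sum_infsum[OF col(1)[of k]]] by (simp add: f_def)
    show "(\<lambda>k. (\<Sum>\<^sub>\<infinity>i. (cmod (M i k))^2) * (cmod (w k))^2) summable_on UNIV"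
      by (rule summable_on_comparison_test[OF summable_on_cmult_right[OF w, of K]])
        (auto intro!: mult_right_mono col(2) mult_nonneg_nonneg infsum_nonneg)
  qed (auto simp: f_def)
  then have "f summable_on UNIV \<times> UNIV"
    by simp
  then have "(\<lambda>(i, k). f (k, i)) summable_on UNIV \<times> UNIV"
    by (subst (asm) summable_on_swap)
  then show ?thesis
    unfolding hilbert_schmidt_def f_def by (simp add: norm_mult power_mult_distrib)
qed

lemma norm_of_nat_powr: "cmod (of_nat n powr s) = real n powr Re s"
  using norm_powr_real_powr[of "of_nat n" s] by simp

lemma summable_on_norm_of_nat_powr:
  assumes "Re s > 1"
  shows "(\<lambda>k. cmod (of_nat (k + 1) powr (- s))) summable_on UNIV"
proof -
  have "summable (\<lambda>n. real n powr (- Re s))"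
    using assms by (subst summable_real_powr_iff) simp
  then have "summable (\<lambda>n. real (Suc n) powr (- Re s))"
    by (subst summable_Suc_iff)
  then show ?thesis
    by (intro summable_nonneg_imp_summable_on) (simp_all add: norm_of_nat_powr del: of_nat_add of_nat_Suc)
qed

lemma trace_class_Ainf_mult_N_pow:
  assumes "M \<in> Ainf" "Re s > 1/2"
  shows "trace_class (mmult M (N_pow s))"
  unfolding trace_class_def
proof (intro exI conjI)
  define h where "h k = (of_nat (k + 1) :: complex) powr (- s)" for k
  have h_square: "(cmod (h k))^2 = cmod (of_nat (k + 1) powr (- (2 * s)))" for k
    unfolding h_def norm_of_nat_powr power2_eq_square
    by (simp add: powr_add[symmetric] del: of_nat_add of_nat_Suc)
  then have h: "(\<lambda>k. (cmod (h k))^2) summable_on UNIV"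
    using summable_on_norm_of_nat_powr[of "2 * s"] assms(2) by simp
  obtain K where "\<And>k. (\<lambda>i. (cmod (M i k))^2) summable_on UNIV" "\<And>k. (\<Sum>\<^sub>\<infinity>i. (cmod (M i k))^2) \<le> K"
    using Ainf_columns_square_summable[OF assms(1)] by blast
  then show "hilbert_schmidt (\<lambda>i k. M i k * h k)"
    using h by (rule hilbert_schmidt_scale_columns)
  show "hilbert_schmidt (diag_mat h)"
    using h by (rule hilbert_schmidt_diag_mat)
  have "h k * h k = of_nat (k + 1) powr (- 2 * s)" for k
    unfolding h_def by (simp add: powr_add[symmetric] del: of_nat_add of_nat_Suc)
  then show "mmult M (N_pow s) = mmult (\<lambda>i k. M i k * h k) (diag_mat h)"
    by (simp add: N_pow_eq_diag_mat mmult_diag_mat_right mult.assoc)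
qed

lemma summable_on_diag_Ainf_mult_N_pow:
  assumes "M \<in> Ainf" "Re s > 1/2"
  shows "(\<lambda>i. mmult M (N_pow s) i i) summable_on UNIV"
proof -
  obtain B where B: "\<And>i k. cmod (M i k) \<le> B"
    using Ainf_bounded[OF assms(1)] by blast
  have "(\<lambda>k. cmod (of_nat (k + 1) powr (- (2 * s)))) summable_on UNIV"
    using summable_on_norm_of_nat_powr[of "2 * s"] assms(2) by simp
  from summable_on_cmult_right[OF this, of B]
  have "(\<lambda>k. norm (M k k * of_nat (k + 1) powr (- 2 * s))) summable_on UNIV"
    by (rule summable_on_comparison_test) (simp_all add: norm_mult B mult_right_mono)
  then show ?thesis
    unfolding N_pow_eq_diag_mat mmult_diag_mat_right by (rule abs_summable_summable)
qed

section \<open>Dirichlet series with rapidly decreasing coefficients\<close>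

definition dirichlet_series :: "(nat \<Rightarrow> complex) \<Rightarrow> complex \<Rightarrow> complex" where
  "dirichlet_series d s = (\<Sum>n. d n * of_nat (n + 1) powr (- s))"

lemma rapid_decay_dirichlet_term_le:
  fixes d :: "nat \<Rightarrow> complex"
  assumes C: "\<And>n. real (n + 1) ^ (R + 2) * cmod (d n) \<le> C" and s: "- Re s \<le> real R"
  shows "cmod (d n * of_nat (n + 1) powr (- s)) \<le> C * (1 / (1 + real n)^2)"
proof -
  have "cmod (d n * of_nat (n + 1) powr (- s)) = cmod (d n) * real (n + 1) powr (- Re s)"
    by (simp only: norm_mult norm_of_nat_powr) simp
  also have "\<dots> \<le> cmod (d n) * real (n + 1) ^ R"
    using s by (simp add: powr_realpow[symmetric] mult_left_mono powr_mono del: of_nat_add of_nat_Suc)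
  also have "\<dots> \<le> C / real (n + 1) ^ 2"
  proof -
    have "cmod (d n) * real (n + 1) ^ R * real (n + 1) ^ 2 \<le> C"
      using C[of n] by (simp only: power_add mult_ac)
    then show ?thesis
      by (simp add: pos_le_divide_eq del: of_nat_add of_nat_Suc)
  qed
  finally show ?thesis
    by (simp add: add.commute)
qed

lemma summable_norm_dirichlet_series_rapid_decay:
  assumes "\<And>p. \<exists>C. \<forall>n. real (n + 1) ^ p * cmod (d n) \<le> C"
  shows "summable (\<lambda>n. cmod (d n * of_nat (n + 1) powr (- s)))"
proof -
  obtain R :: nat where R: "- Re s \<le> real R"
    using real_arch_simple by blast
  obtain C where "\<And>n. real (n + 1) ^ (R + 2) * cmod (d n) \<le> C"
    using assms by blast
  from rapid_decay_dirichlet_term_le[OF this R] show ?thesis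
    by (intro summable_comparison_test'[OF summable_mult[OF summable_inverse_square_Suc, of C]]) auto
qed

lemma holomorphic_dirichlet_series_rapid_decay:
  assumes "\<And>p. \<exists>C. \<forall>n. real (n + 1) ^ p * cmod (d n) \<le> C"
  shows "dirichlet_series d holomorphic_on UNIV"
proof (rule holomorphic_uniform_sequence[OF open_UNIV])
  show "(\<lambda>s. \<Sum>i<n. d i * of_nat (i + 1) powr (- s)) holomorphic_on UNIV" for n
    by (intro holomorphic_intros)
  fix z :: complex
  obtain R :: nat where R: "1 - Re z \<le> real R"
    using real_arch_simple by blast
  obtain C where C: "\<And>n. real (n + 1) ^ (R + 2) * cmod (d n) \<le> C"
    using assms by blast
  have "- Re s \<le> real R" if "s \<in> cball z 1" for s
    using that abs_Re_le_cmod[of "z - s"] R by (auto simp: dist_norm)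
  then have "uniform_limit (cball z 1) (\<lambda>n s. \<Sum>i<n. d i * of_nat (i + 1) powr (- s)) (dirichlet_series d) sequentially"
    unfolding dirichlet_series_def
    by (intro Weierstrass_m_test[OF rapid_decay_dirichlet_term_le[OF C]] summable_mult summable_inverse_square_Suc)
  then show "\<exists>r>0. cball z r \<subseteq> UNIV \<and> uniform_limit (cball z r) (\<lambda>n s. \<Sum>i<n. d i * of_nat (i + 1) powr (- s)) (dirichlet_series d) sequentially"
    by (intro exI[of _ 1]) auto
qed

lemma dirichlet_series_0:
  assumes "(\<lambda>n. norm (d n)) summable_on UNIV"
  shows "dirichlet_series d 0 = (\<Sum>\<^sub>\<infinity>n. d n)"
  unfolding dirichlet_series_def
  by (simp add: infsum_eq_suminf abs_summable_summable[OF assms] del: of_nat_add of_nat_Suc)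

section \<open>Traces in the representation \<open>\<mu>\<close>\<close>

lemma psi_eq_dirichlet_series:
  assumes "x \<in> C_inf_S2q" "Re s > 1/2"
  shows "psi x s = dirichlet_series (\<lambda>n. mu_plus x n n - mu_minus x n n) (2 * s)"
proof -
  have P: "(\<lambda>i. mmult (mu_plus x) (N_pow s) i i) summable_on UNIV"
    and Q: "(\<lambda>i. mmult (mu_minus x) (N_pow s) i i) summable_on UNIV"
    using summable_on_diag_Ainf_mult_N_pow C_inf_S2q_Ainf[OF assms(1)] assms(2) by blast+
  have "psi x s = mtrace (mmult (mu_plus x) (N_pow s)) + mtrace (\<lambda>i k. - mmult (mu_minus x) (N_pow s) i k)"
    unfolding psi_def mmult_gamma_mu_absD_pow by (rule mtrace_blk) (use P Q in \<open>simp_all add: summable_on_uminus\<close>)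
  also have "\<dots> = (\<Sum>\<^sub>\<infinity>i. mmult (mu_plus x) (N_pow s) i i + - mmult (mu_minus x) (N_pow s) i i)"
    unfolding mtrace_def by (rule infsum_add[symmetric]) (use P Q in \<open>simp_all add: summable_on_uminus\<close>)
  also have "\<dots> = (\<Sum>\<^sub>\<infinity>i. (mu_plus x i i - mu_minus x i i) * of_nat (i + 1) powr (- (2 * s)))"
    by (simp add: N_pow_eq_diag_mat mmult_diag_mat_right algebra_simps)
  also have "\<dots> = dirichlet_series (\<lambda>n. mu_plus x n n - mu_minus x n n) (2 * s)"
    unfolding dirichlet_series_def
    using rapid_decay_mat_diagonal[OF C_inf_S2q_rapid_decay_diff[OF assms(1)]]
    by (intro infsum_eq_suminf norm_summable_imp_summable_on summable_norm_dirichlet_series_rapid_decay) auto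
  finally show ?thesis .
qed

lemma trace_class_mcomm_F_mu:
  assumes "x \<in> C_inf_S2q"
  shows "trace_class (mcomm F_op (mu x))"
proof -
  have "trace_class (\<lambda>i k. mu_plus x i k - mu_minus x i k)"
    using C_inf_S2q_rapid_decay_diff[OF assms] by (rule trace_class_rapid_decay_mat)
  moreover from trace_class_uminus[OF this]
  have "trace_class (\<lambda>i k. mu_minus x i k - mu_plus x i k)"
    by simp
  ultimately show ?thesis
    unfolding mcomm_F_mu by (intro trace_class_blk_antidiag)
qed

lemma trace_class_gamma_mu_absD_pow:
  assumes "x \<in> C_inf_S2q" "Re s > 1/2"
  shows "trace_class (mmult (mmult gamma_op (mu x)) (absD_pow s))"
  unfolding mmult_gamma_mu_absD_pow
  using C_inf_S2q_Ainf[OF assms(1)]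
  by (intro trace_class_blk_diag trace_class_uminus trace_class_Ainf_mult_N_pow assms(2))

lemma mtrace_chern_character:
  assumes "x \<in> C_inf_S2q"
  shows "mtrace (mmult (mmult gamma_op F_op) (mcomm F_op (mu x)))
    = 2 * mtrace (\<lambda>i k. mu_plus x i k - mu_minus x i k)"
proof -
  have "(\<lambda>n. mu_plus x n n - mu_minus x n n) summable_on UNIV"
    by (rule abs_summable_summable[OF rapid_decay_mat_diag_summable[OF C_inf_S2q_rapid_decay_diff[OF assms]]])
  then show ?thesis
    unfolding mmult_gamma_F_mcomm_F_mu by (subst mtrace_blk) (simp_all add: mtrace_def)
qed

theorem mainTheorem6:
  fixes q :: real and x :: "mat \<times> mat"
  assumes "0 < q" and "q < 1" and "x \<in> C_inf_S2q"
  shows "rapid_decay_mat (\<lambda>i k. mu_plus x i k - mu_minus x i k)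
    \<and> trace_class (mcomm F_op (mu x))
    \<and> (\<forall>s. Re s > 1/2 \<longrightarrow> trace_class (mmult (mmult gamma_op (mu x)) (absD_pow s)))
    \<and> (\<exists>g. g holomorphic_on UNIV
         \<and> (\<forall>s. Re s > 1/2 \<longrightarrow> g s = psi x s)
         \<and> residue (\<lambda>s. g s / s) 0 = g 0
         \<and> g 0 = 1/2 * mtrace (mmult (mmult gamma_op F_op) (mcomm F_op (mu x)))
         \<and> g 0 = mtrace (\<lambda>i k. mu_plus x i k - mu_minus x i k))"
proof -
  define D where "D = (\<lambda>i k. mu_plus x i k - mu_minus x i k)"
  have D: "rapid_decay_mat D"
    unfolding D_def by (rule C_inf_S2q_rapid_decay_diff[OF assms(3)])
  define g where "g = dirichlet_series (\<lambda>n. D n n) \<circ> (\<lambda>s. 2 * s)"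
  have holo: "g holomorphic_on UNIV"
    unfolding g_def using holomorphic_dirichlet_series_rapid_decay[OF rapid_decay_mat_diagonal[OF D]]
    by (intro holomorphic_on_compose holomorphic_intros) (rule holomorphic_on_subset, auto)
  have "g 0 = mtrace D"
    unfolding g_def mtrace_def using dirichlet_series_0[OF rapid_decay_mat_diag_summable[OF D]] by simp
  moreover have "residue (\<lambda>s. g s / s) 0 = g 0"
    using residue_simple[OF open_UNIV UNIV_I[of 0] holo] by simp
  moreover have "g s = psi x s" if "Re s > 1/2" for s
    unfolding g_def D_def using psi_eq_dirichlet_series[OF assms(3) that] by simp
  ultimately show ?thesis
    using D holo trace_class_mcomm_F_mu[OF assms(3)] trace_class_gamma_mu_absD_pow[OF assms(3)]
      mtrace_chern_character[OF assms(3)]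
    unfolding D_def by (intro conjI exI[of _ g] allI impI) auto
qed

end
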